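(* Let $A$ be a basic connected finite dimensional algebra over an algebraically closed field $k$ with ordinary quiver $Q$ without oriented cycles, and let $\nu\colon kQ\twoheadrightarrow A$ be a presentation with kernel $I$. Regard $\mathsf{Hom}(\pi_1(Q,I),k^+)$ as an abelian Lie algebra (zero bracket). Then $\theta_\nu\colon\mathsf{Hom}(\pi_1(Q,I),k^+)\to\mathsf{HH}^1(A)$ is a Lie algebra homomorphism; in particular $\mathsf{Im}(\theta_\nu)$ is an abelian Lie subalgebra of $\mathsf{HH}^1(A)$.
   Context: Fix a complete set $e_1,\dots,e_n$ of primitive orthogonal idempotents of $A$ (indexed by $Q_0=\{1,\dots,n\}$), $E=\bigoplus ke_i$. A presentation is a surjective algebra homomorphism $\nu\colon kQ\twoheadrightarrow A$ with admissible kernel (i.e. $(kQ^+)^N\subseteq\mathsf{Ker}\,\nu\subseteq(kQ^+)^2$ for some $N\ge2$, $kQ^+$ the arrow ideal) and $\nu(e_i)=e_i$. Walks are paths in $Q$ with formal inverses of arrows allowed. The homotopy relation $\sim_I$ is the smallest equivalence relation on walks with $\alpha\alpha^{-1}\sim_I e_y$, $\alpha^{-1}\alpha\sim_I e_x$ for arrows $\alpha\colon x\to y$, compatible with concatenation ($v\sim_I v'\Rightarrow wvu\sim_I wv'u$), and with $u\sim_I v$ for paths $u,v$ occurring with nonzero coefficient in a same minimal relation of $I$ (a nonzero $\sum t_iu_i\in I$, $t_i\ne0$, distinct paths, no nonempty proper subsum in $I$). With a fixed base vertex $x_0$, $\pi_1(Q,I)$ is the group of classes of closed walks at $x_0$.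 $\mathsf{HH}^1(A)$ is identified with $Der_0(A)/Int_0(A)$, where $Der_0(A)$ consists of derivations vanishing on all $e_i$ (Lie bracket: commutator) and $Int_0(A)=\{a\mapsto ea-ae\mid e\in E\}$. Fix a maximal tree $T$ of $Q$ and let $\gamma_x$ be the minimal walk in $T$ from $x_0$ to $x$. For $f\colon\pi_1(Q,I)\to k^+$ a group homomorphism, $\theta_\nu(f)$ is the class of the derivation $\tilde f$ with $\tilde f(\nu(u))=f([\gamma_y^{-1}u\gamma_x]_I)\nu(u)$ for all paths $u$ from $x$ to $y$. *)

theory Defs
  imports "HOL-Algebra.Group" "HOL-Computational_Algebra.Polynomial"
begin

definition alg_closed :: "'k::field itself \<Rightarrow> bool" where
  "alg_closed _ \<longleftrightarrow> (\<forall>p::'k poly. degree p \<noteq> 0 \<longrightarrow> (\<exists>x. poly p x = 0))"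

definition kalgebra :: "('k::field \<Rightarrow> 'a::ring_1 \<Rightarrow> 'a) \<Rightarrow> bool" where
  "kalgebra sc \<longleftrightarrow>
     (\<forall>c a b. sc c (a + b) = sc c a + sc c b) \<and>
     (\<forall>c d a. sc (c + d) a = sc c a + sc d a) \<and>
     (\<forall>c d a. sc (c * d) a = sc c (sc d a)) \<and>
     (\<forall>a. sc 1 a = a) \<and>
     (\<forall>c a b. sc c (a * b) = sc c a * b) \<and>
     (\<forall>c a b. sc c (a * b) = a * sc c b)"

record ('v, 'e) quiver =
  verts :: "'v set"
  arrs  :: "'e set"
  src   :: "'e \<Rightarrow> 'v"
  tgt   :: "'e \<Rightarrow> 'v"

text \<open>A walk is a start vertex together with the list of steps traversed in order;
  a step (a, True) traverses the arrow a, a step (a, False) traverses its formal inverse.\<close>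
type_synonym ('v, 'e) walk = "'v \<times> ('e \<times> bool) list"

fun step_src :: "('v, 'e, 'm) quiver_scheme \<Rightarrow> 'e \<times> bool \<Rightarrow> 'v" where
  "step_src Q (a, b) = (if b then src Q a else tgt Q a)"

fun step_tgt :: "('v, 'e, 'm) quiver_scheme \<Rightarrow> 'e \<times> bool \<Rightarrow> 'v" where
  "step_tgt Q (a, b) = (if b then tgt Q a else src Q a)"

fun walk_end :: "('v, 'e, 'm) quiver_scheme \<Rightarrow> 'v \<Rightarrow> ('e \<times> bool) list \<Rightarrow> 'v" where
  "walk_end Q x [] = x"
| "walk_end Q x (s # ws) = walk_end Q (step_tgt Q s) ws"

fun walk_ok :: "('v, 'e, 'm) quiver_scheme \<Rightarrow> 'v \<Rightarrow> ('e \<times> bool) list \<Rightarrow> bool" where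
  "walk_ok Q x [] = True"
| "walk_ok Q x (s # ws) = (step_src Q s = x \<and> walk_ok Q (step_tgt Q s) ws)"

definition wstart :: "('v, 'e) walk \<Rightarrow> 'v" where
  "wstart w = fst w"

definition wend :: "('v, 'e, 'm) quiver_scheme \<Rightarrow> ('v, 'e) walk \<Rightarrow> 'v" where
  "wend Q w = walk_end Q (fst w) (snd w)"

definition is_walk :: "('v, 'e, 'm) quiver_scheme \<Rightarrow> ('v, 'e) walk \<Rightarrow> bool" where
  "is_walk Q w \<longleftrightarrow> fst w \<in> verts Q \<and> (\<forall>s \<in> set (snd w). fst s \<in> arrs Q) \<and> walk_ok Q (fst w) (snd w)"

text \<open>Paths: walks using no inverse arrows. The trivial path at x is (x, []).\<close>
definition is_path :: "('v, 'e, 'm) quiver_scheme \<Rightarrow> ('v, 'e) walk \<Rightarrow> bool" where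
  "is_path Q w \<longleftrightarrow> is_walk Q w \<and> (\<forall>s \<in> set (snd w). snd s)"

definition path_len :: "('v, 'e) walk \<Rightarrow> nat" where
  "path_len w = length (snd w)"

text \<open>Concatenation, written right to left as in the paper: wcomp v u = v u is "first u, then v".\<close>
definition wcomp :: "('v, 'e) walk \<Rightarrow> ('v, 'e) walk \<Rightarrow> ('v, 'e) walk" where
  "wcomp v u = (fst u, snd u @ snd v)"

definition winv :: "('v, 'e, 'm) quiver_scheme \<Rightarrow> ('v, 'e) walk \<Rightarrow> ('v, 'e) walk" where
  "winv Q w = (wend Q w, rev (map (\<lambda>(a, b). (a, \<not> b)) (snd w)))"

definition connected_quiver :: "('v, 'e, 'm) quiver_scheme \<Rightarrow> bool" where
  "connected_quiver Q \<longleftrightarrow>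
     (\<forall>x \<in> verts Q. \<forall>y \<in> verts Q. \<exists>w. is_walk Q w \<and> wstart w = x \<and> wend Q w = y)"

definition no_oriented_cycles :: "('v, 'e, 'm) quiver_scheme \<Rightarrow> bool" where
  "no_oriented_cycles Q \<longleftrightarrow> (\<forall>p. is_path Q p \<and> snd p \<noteq> [] \<longrightarrow> wend Q p \<noteq> wstart p)"

definition finite_quiver :: "('v, 'e, 'm) quiver_scheme \<Rightarrow> bool" where
  "finite_quiver Q \<longleftrightarrow> finite (verts Q) \<and> finite (arrs Q)
     \<and> (\<forall>a \<in> arrs Q. src Q a \<in> verts Q \<and> tgt Q a \<in> verts Q)"

definition reduced :: "('e \<times> bool) list \<Rightarrow> bool" where
  "reduced ws \<longleftrightarrow> (\<forall>i. Suc i < length ws \<longrightarrow>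
      \<not> (fst (ws ! i) = fst (ws ! Suc i) \<and> snd (ws ! i) \<noteq> snd (ws ! Suc i)))"

definition tree_walk :: "('v, 'e, 'm) quiver_scheme \<Rightarrow> 'e set \<Rightarrow> 'v \<Rightarrow> 'v \<Rightarrow> ('e \<times> bool) list \<Rightarrow> bool" where
  "tree_walk Q T x y ws \<longleftrightarrow> is_walk Q (x, ws) \<and> (\<forall>s \<in> set ws. fst s \<in> T) \<and> reduced ws
      \<and> wend Q (x, ws) = y"

definition max_tree :: "('v, 'e, 'm) quiver_scheme \<Rightarrow> 'e set \<Rightarrow> bool" where
  "max_tree Q T \<longleftrightarrow> T \<subseteq> arrs Q \<and>
     (\<forall>x \<in> verts Q. \<forall>y \<in> verts Q. \<exists>!ws. tree_walk Q T x y ws)"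

definition gamma :: "('v, 'e, 'm) quiver_scheme \<Rightarrow> 'e set \<Rightarrow> 'v \<Rightarrow> 'v \<Rightarrow> ('v, 'e) walk" where
  "gamma Q T x0 x = (x0, THE ws. tree_walk Q T x0 x ws)"

text \<open>Elements of kQ: finitely supported k-linear combinations of paths.\<close>
definition pathalg :: "('v, 'e, 'm) quiver_scheme \<Rightarrow> (('v, 'e) walk \<Rightarrow> 'k::field) set" where
  "pathalg Q = {c. finite {p. c p \<noteq> 0} \<and> (\<forall>p. c p \<noteq> 0 \<longrightarrow> is_path Q p)}"

definition linext :: "('k::field \<Rightarrow> 'a::ring_1 \<Rightarrow> 'a) \<Rightarrow> (('v, 'e) walk \<Rightarrow> 'a)
    \<Rightarrow> (('v, 'e) walk \<Rightarrow> 'k) \<Rightarrow> 'a" where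
  "linext sc nu c = (\<Sum>p \<in> {p. c p \<noteq> 0}. sc (c p) (nu p))"

text \<open>nu (given on the path basis of kQ) is a presentation of A (the type 'a with scalar
  multiplication sc) sending the trivial paths to the idempotents e x:
  the linear extension is a surjective unital algebra homomorphism kQ -> A
  (multiplication in kQ: v u = concatenation if u ends where v starts, 0 otherwise),
  and its kernel I is admissible: (kQ+)^N \<subseteq> I \<subseteq> (kQ+)^2 for some N \<ge> 2.\<close>
definition presentation :: "('v, 'e, 'm) quiver_scheme \<Rightarrow> ('k::field \<Rightarrow> 'a::ring_1 \<Rightarrow> 'a)
    \<Rightarrow> ('v \<Rightarrow> 'a) \<Rightarrow> (('v, 'e) walk \<Rightarrow> 'a) \<Rightarrow> bool" where
  "presentation Q sc e nu \<longleftrightarrow>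
     (\<forall>x \<in> verts Q. nu (x, []) = e x) \<and>
     (\<Sum>x \<in> verts Q. e x) = 1 \<and>
     (\<forall>u v. is_path Q u \<and> is_path Q v \<longrightarrow>
         nu v * nu u = (if wend Q u = wstart v then nu (wcomp v u) else 0)) \<and>
     (\<forall>a. \<exists>c \<in> pathalg Q. linext sc nu c = a) \<and>
     (\<exists>N \<ge> 2. \<forall>p. is_path Q p \<and> path_len p \<ge> N \<longrightarrow> nu p = 0) \<and>
     (\<forall>c \<in> pathalg Q. linext sc nu c = 0 \<longrightarrow> (\<forall>p. path_len p < 2 \<longrightarrow> c p = 0))"

definition min_relation :: "('v, 'e, 'm) quiver_scheme \<Rightarrow> ('k::field \<Rightarrow> 'a::ring_1 \<Rightarrow> 'a)
    \<Rightarrow> (('v, 'e) walk \<Rightarrow> 'a) \<Rightarrow> (('v, 'e) walk \<Rightarrow> 'k) \<Rightarrow> bool" where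
  "min_relation Q sc nu c \<longleftrightarrow> c \<in> pathalg Q \<and> (\<exists>p. c p \<noteq> 0) \<and> linext sc nu c = 0 \<and>
     (\<forall>S. S \<subseteq> {p. c p \<noteq> 0} \<and> S \<noteq> {} \<and> S \<noteq> {p. c p \<noteq> 0} \<longrightarrow>
        linext sc nu (\<lambda>p. if p \<in> S then c p else 0) \<noteq> 0)"

inductive homot :: "('v, 'e, 'm) quiver_scheme \<Rightarrow> ('k::field \<Rightarrow> 'a::ring_1 \<Rightarrow> 'a)
    \<Rightarrow> (('v, 'e) walk \<Rightarrow> 'a) \<Rightarrow> ('v, 'e) walk \<Rightarrow> ('v, 'e) walk \<Rightarrow> bool"
  for Q sc nu where
  inv_left: "a \<in> arrs Q \<Longrightarrow> homot Q sc nu (src Q a, [(a, True), (a, False)]) (src Q a, [])"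
| inv_right: "a \<in> arrs Q \<Longrightarrow> homot Q sc nu (tgt Q a, [(a, False), (a, True)]) (tgt Q a, [])"
| minrel: "min_relation Q sc nu c \<Longrightarrow> c u \<noteq> 0 \<Longrightarrow> c v \<noteq> 0 \<Longrightarrow> homot Q sc nu u v"
| refl: "is_walk Q w \<Longrightarrow> homot Q sc nu w w"
| sym: "homot Q sc nu v w \<Longrightarrow> homot Q sc nu w v"
| trans: "homot Q sc nu u v \<Longrightarrow> homot Q sc nu v w \<Longrightarrow> homot Q sc nu u w"
| cong: "homot Q sc nu v v' \<Longrightarrow> is_walk Q (wcomp w (wcomp v u)) \<Longrightarrow>
         is_walk Q (wcomp w (wcomp v' u)) \<Longrightarrow>
         homot Q sc nu (wcomp w (wcomp v u)) (wcomp w (wcomp v' u))"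

definition hclass :: "('v, 'e, 'm) quiver_scheme \<Rightarrow> ('k::field \<Rightarrow> 'a::ring_1 \<Rightarrow> 'a)
    \<Rightarrow> (('v, 'e) walk \<Rightarrow> 'a) \<Rightarrow> ('v, 'e) walk \<Rightarrow> ('v, 'e) walk set" where
  "hclass Q sc nu w = {w'. homot Q sc nu w w'}"

definition pi1 :: "('v, 'e, 'm) quiver_scheme \<Rightarrow> ('k::field \<Rightarrow> 'a::ring_1 \<Rightarrow> 'a)
    \<Rightarrow> (('v, 'e) walk \<Rightarrow> 'a) \<Rightarrow> 'v \<Rightarrow> ('v, 'e) walk set monoid" where
  "pi1 Q sc nu x0 =
     \<lparr> carrier = {hclass Q sc nu w | w. is_walk Q w \<and> wstart w = x0 \<and> wend Q w = x0},
       monoid.mult = (\<lambda>C D. hclass Q sc nu (wcomp (SOME w. w \<in> C) (SOME v. v \<in> D))),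
       one = hclass Q sc nu (x0, []) \<rparr>"

definition kplus :: "'k::field monoid" where
  "kplus = \<lparr> carrier = UNIV, monoid.mult = (+), one = 0 \<rparr>"

definition Der0 :: "('k::field \<Rightarrow> 'a::ring_1 \<Rightarrow> 'a) \<Rightarrow> ('v \<Rightarrow> 'a) \<Rightarrow> 'v set \<Rightarrow> ('a \<Rightarrow> 'a) set" where
  "Der0 sc e V = {D. (\<forall>a b. D (a + b) = D a + D b) \<and> (\<forall>c a. D (sc c a) = sc c (D a)) \<and>
      (\<forall>a b. D (a * b) = D a * b + a * D b) \<and> (\<forall>x \<in> V. D (e x) = 0)}"

definition Int0 :: "('k::field \<Rightarrow> 'a::ring_1 \<Rightarrow> 'a) \<Rightarrow> ('v \<Rightarrow> 'a) \<Rightarrow> 'v set \<Rightarrow> ('a \<Rightarrow> 'a) set" where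
  "Int0 sc e V = {D. \<exists>lam::'v \<Rightarrow> 'k. let eps = (\<Sum>x \<in> V. sc (lam x) (e x)) in
      D = (\<lambda>a. eps * a - a * eps)}"

text \<open>Class of a derivation in HH^1(A) = Der0 / Int0.\<close>
definition hh_class :: "('k::field \<Rightarrow> 'a::ring_1 \<Rightarrow> 'a) \<Rightarrow> ('v \<Rightarrow> 'a) \<Rightarrow> 'v set
    \<Rightarrow> ('a \<Rightarrow> 'a) \<Rightarrow> ('a \<Rightarrow> 'a) set" where
  "hh_class sc e V D = {D' \<in> Der0 sc e V. (\<lambda>a. D' a - D a) \<in> Int0 sc e V}"

definition hh_add :: "('k::field \<Rightarrow> 'a::ring_1 \<Rightarrow> 'a) \<Rightarrow> ('v \<Rightarrow> 'a) \<Rightarrow> 'v set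
    \<Rightarrow> ('a \<Rightarrow> 'a) set \<Rightarrow> ('a \<Rightarrow> 'a) set \<Rightarrow> ('a \<Rightarrow> 'a) set" where
  "hh_add sc e V C1 C2 = hh_class sc e V (\<lambda>a. (SOME D. D \<in> C1) a + (SOME D. D \<in> C2) a)"

definition hh_scale :: "('k::field \<Rightarrow> 'a::ring_1 \<Rightarrow> 'a) \<Rightarrow> ('v \<Rightarrow> 'a) \<Rightarrow> 'v set
    \<Rightarrow> 'k \<Rightarrow> ('a \<Rightarrow> 'a) set \<Rightarrow> ('a \<Rightarrow> 'a) set" where
  "hh_scale sc e V c C = hh_class sc e V (\<lambda>a. sc c ((SOME D. D \<in> C) a))"

definition hh_bracket :: "('k::field \<Rightarrow> 'a::ring_1 \<Rightarrow> 'a) \<Rightarrow> ('v \<Rightarrow> 'a) \<Rightarrow> 'v set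
    \<Rightarrow> ('a \<Rightarrow> 'a) set \<Rightarrow> ('a \<Rightarrow> 'a) set \<Rightarrow> ('a \<Rightarrow> 'a) set" where
  "hh_bracket sc e V C1 C2 =
     (let D1 = (SOME D. D \<in> C1); D2 = (SOME D. D \<in> C2) in
      hh_class sc e V (\<lambda>a. D1 (D2 a) - D2 (D1 a)))"

definition is_ftilde :: "('v, 'e, 'm) quiver_scheme \<Rightarrow> ('k::field \<Rightarrow> 'a::ring_1 \<Rightarrow> 'a)
    \<Rightarrow> ('v \<Rightarrow> 'a) \<Rightarrow> (('v, 'e) walk \<Rightarrow> 'a) \<Rightarrow> 'e set \<Rightarrow> 'v
    \<Rightarrow> (('v, 'e) walk set \<Rightarrow> 'k) \<Rightarrow> ('a \<Rightarrow> 'a) \<Rightarrow> bool" where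
  "is_ftilde Q sc e nu T x0 f D \<longleftrightarrow> D \<in> Der0 sc e (verts Q) \<and>
     (\<forall>u. is_path Q u \<longrightarrow>
        D (nu u) = sc (f (hclass Q sc nu
            (wcomp (winv Q (gamma Q T x0 (wend Q u))) (wcomp u (gamma Q T x0 (wstart u))))))
          (nu u))"

definition ftilde where
  "ftilde Q sc e nu T x0 f = (SOME D. is_ftilde Q sc e nu T x0 f D)"

definition theta where
  "theta Q sc e nu T x0 f = hh_class sc e (verts Q) (ftilde Q sc e nu T x0 f)"

end

(* A homomorphism f : pi1(Q,I) -> k^+ gives every path u from x to y the weight
   w_f(u) = f[gamma_y^-1 u gamma_x].  These weights are additive under concatenation (the detours
   through the tree cancel) and constant on the support of every minimal relation (its paths share
   their endpoints and are homotopic).  As a relation that is not minimal splits into two relations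
   of smaller support, the diagonal map nu(u) |-> w_f(u) nu(u) is well defined on A; additivity makes
   it a derivation vanishing on the e_i, and it depends linearly on f.  Inner derivations by elements
   of E act diagonally on the spanning set of paths as well, so every representative of theta(f) does,
   and diagonal operators commute. *)

theory Submission imports Defs begin

section \<open>Scalar multiplication, linear maps and inner derivations\<close>

locale k_algebra =
  fixes sc :: "'k::field \<Rightarrow> 'a::ring_1 \<Rightarrow> 'a"
  assumes kalgebra: "kalgebra sc"
begin

lemma sc_right_distrib: "sc c (a + b) = sc c a + sc c b"
  using kalgebra unfolding kalgebra_def by blast

lemma sc_left_distrib: "sc (c + d) a = sc c a + sc d a"
  using kalgebra unfolding kalgebra_def by blast

lemma sc_sc: "sc c (sc d a) = sc (c * d) a"
  using kalgebra unfolding kalgebra_def by simp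

lemma sc_one [simp]: "sc 1 a = a"
  using kalgebra unfolding kalgebra_def by blast

lemma mult_sc_left: "sc c a * b = sc c (a * b)"
  using kalgebra unfolding kalgebra_def by metis

lemma mult_sc_right: "a * sc c b = sc c (a * b)"
  using kalgebra unfolding kalgebra_def by metis

lemma sc_zero_left [simp]: "sc 0 a = 0"
  using sc_left_distrib[of 0 0 a] by simp

lemma sc_zero_right [simp]: "sc c 0 = 0"
  using sc_right_distrib[of c 0 0] by simp

lemma sc_minus_left: "sc (- c) a = - sc c a"
  using sc_left_distrib[of c "- c" a] by (simp add: eq_neg_iff_add_eq_0 add.commute)

lemma sc_minus_right: "sc c (- a) = - sc c a"
  using sc_right_distrib[of c a "- a"] by (simp add: eq_neg_iff_add_eq_0 add.commute)

lemma sc_left_diff_distrib: "sc (c - d) a = sc c a - sc d a"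
  using sc_left_distrib[of c "- d" a] by (simp add: sc_minus_left)

lemma sc_right_diff_distrib: "sc c (a - b) = sc c a - sc c b"
  using sc_right_distrib[of c a "- b"] by (simp add: sc_minus_right)

lemma sc_sum_right: "sc c (sum f S) = (\<Sum>x\<in>S. sc c (f x))"
  by (induction S rule: infinite_finite_induct) (auto simp: sc_right_distrib)

lemma sc_commute: "sc c (sc d a) = sc d (sc c a)"
  by (simp add: sc_sc mult.commute)

lemma linext_superset:
  assumes "finite S" "{p. c p \<noteq> 0} \<subseteq> S"
  shows "linext sc F c = (\<Sum>p\<in>S. sc (c p) (F p))"
  unfolding linext_def by (rule sum.mono_neutral_left) (use assms in auto)

lemma linext_add:
  assumes "finite {p. c p \<noteq> 0}" "finite {p. d p \<noteq> 0}"
  shows "linext sc F (\<lambda>p. c p + d p) = linext sc F c + linext sc F d"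
proof -
  let ?S = "{p. c p \<noteq> 0} \<union> {p. d p \<noteq> 0}"
  have "finite ?S" using assms by simp
  then show ?thesis
    by (subst (1 2 3) linext_superset[where S = ?S]) (auto simp: sc_left_distrib sum.distrib)
qed

lemma linext_diff:
  assumes "finite {p. c p \<noteq> 0}" "finite {p. d p \<noteq> 0}"
  shows "linext sc F (\<lambda>p. c p - d p) = linext sc F c - linext sc F d"
proof -
  let ?S = "{p. c p \<noteq> 0} \<union> {p. d p \<noteq> 0}"
  have "finite ?S" using assms by simp
  then show ?thesis
    by (subst (1 2 3) linext_superset[where S = ?S]) (auto simp: sc_left_diff_distrib sum_subtractf)
qed

lemma linext_scale:
  assumes "finite {p. c p \<noteq> 0}"
  shows "linext sc F (\<lambda>p. k * c p) = sc k (linext sc F c)"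
  using assms
  by (subst (1 2) linext_superset[where S = "{p. c p \<noteq> 0}"]) (auto simp: sc_sum_right sc_sc)

lemma linext_add_fun: "linext sc (\<lambda>p. F p + G p) c = linext sc F c + linext sc G c"
  unfolding linext_def by (simp add: sc_right_distrib sum.distrib)

lemma linext_sc_fun: "linext sc (\<lambda>p. sc k (F p)) c = sc k (linext sc F c)"
  unfolding linext_def by (simp add: sc_sum_right sc_commute)

lemma linext_delta: "linext sc F (\<lambda>p. if p = q then 1 else 0) = F q"
proof -
  have "{p. (if p = q then 1 else 0) \<noteq> (0::'k)} = {q}" by auto
  then show ?thesis unfolding linext_def by simp
qed

lemma linext_cong:
  assumes "\<And>p. c p \<noteq> 0 \<Longrightarrow> F p = G p"
  shows "linext sc F c = linext sc G c"
  unfolding linext_def using assms by (intro sum.cong) auto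

definition k_linear :: "('a \<Rightarrow> 'a) \<Rightarrow> bool" where
  "k_linear D \<longleftrightarrow> (\<forall>a b. D (a + b) = D a + D b) \<and> (\<forall>c a. D (sc c a) = sc c (D a))"

lemma k_linear_add: "k_linear D \<Longrightarrow> D (a + b) = D a + D b"
  unfolding k_linear_def by blast

lemma k_linear_sc: "k_linear D \<Longrightarrow> D (sc c a) = sc c (D a)"
  unfolding k_linear_def by blast

lemma k_linear_zero: "k_linear D \<Longrightarrow> D 0 = 0"
  using k_linear_add[of D 0 0] by simp

lemma k_linear_sum:
  assumes "k_linear D"
  shows "D (sum g S) = (\<Sum>x\<in>S. D (g x))"
  by (induction S rule: infinite_finite_induct)
    (auto simp: k_linear_zero[OF assms] k_linear_add[OF assms])

lemma k_linear_linext: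
  assumes "k_linear D"
  shows "D (linext sc F c) = linext sc (\<lambda>p. D (F p)) c"
  unfolding linext_def by (simp add: k_linear_sum[OF assms] k_linear_sc[OF assms])

lemma Der0_k_linear: "D \<in> Der0 sc e V \<Longrightarrow> k_linear D"
  unfolding Der0_def k_linear_def by blast

lemma Int0_iff:
  "D \<in> Int0 sc e V \<longleftrightarrow> (\<exists>l. D = (\<lambda>a. (\<Sum>x\<in>V. sc (l x) (e x)) * a - a * (\<Sum>x\<in>V. sc (l x) (e x))))"
  unfolding Int0_def Let_def by simp

lemma Int0_add:
  assumes "D1 \<in> Int0 sc e V" "D2 \<in> Int0 sc e V"
  shows "(\<lambda>a. D1 a + D2 a) \<in> Int0 sc e V"
proof -
  obtain l1 l2 where "D1 = (\<lambda>a. (\<Sum>x\<in>V. sc (l1 x) (e x)) * a - a * (\<Sum>x\<in>V. sc (l1 x) (e x)))"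
      "D2 = (\<lambda>a. (\<Sum>x\<in>V. sc (l2 x) (e x)) * a - a * (\<Sum>x\<in>V. sc (l2 x) (e x)))"
    using assms unfolding Int0_iff by blast
  then show ?thesis unfolding Int0_iff
    by (intro exI[of _ "\<lambda>x. l1 x + l2 x"]) (simp add: sc_left_distrib sum.distrib algebra_simps)
qed

lemma Int0_scale:
  assumes "D \<in> Int0 sc e V"
  shows "(\<lambda>a. sc c (D a)) \<in> Int0 sc e V"
proof -
  obtain l where "D = (\<lambda>a. (\<Sum>x\<in>V. sc (l x) (e x)) * a - a * (\<Sum>x\<in>V. sc (l x) (e x)))"
    using assms unfolding Int0_iff by blast
  then show ?thesis unfolding Int0_iff
    by (intro exI[of _ "\<lambda>x. c * l x"])
       (simp add: sc_right_diff_distrib mult_sc_left mult_sc_right sc_sum_right sum_distrib_left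
         sum_distrib_right sc_sc)
qed

lemma Int0_uminus: "D \<in> Int0 sc e V \<Longrightarrow> (\<lambda>a. - D a) \<in> Int0 sc e V"
  using Int0_scale[of D e V "- 1"] by (simp add: sc_minus_left)

lemma Int0_zero: "(\<lambda>a. 0) \<in> Int0 sc e V"
  unfolding Int0_iff by (intro exI[of _ "\<lambda>x. 0"]) simp

lemma hh_class_eqI:
  assumes "(\<lambda>a. X a - Y a) \<in> Int0 sc e V"
  shows "hh_class sc e V X = hh_class sc e V Y"
proof -
  have shift: "(\<lambda>a. D a - Y a) \<in> Int0 sc e V"
    if "(\<lambda>a. D a - X a) \<in> Int0 sc e V" "(\<lambda>a. X a - Y a) \<in> Int0 sc e V" for D X Y
    using Int0_add[OF that] by simp
  have "(\<lambda>a. Y a - X a) \<in> Int0 sc e V" using Int0_uminus[OF assms] by simp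
  then show ?thesis unfolding hh_class_def using shift[of _ X Y] shift[of _ Y X] assms by blast
qed

lemma some_in_hh_class:
  assumes "X \<in> Der0 sc e V"
  shows "(SOME D. D \<in> hh_class sc e V X) \<in> hh_class sc e V X"
proof -
  have "X \<in> hh_class sc e V X" unfolding hh_class_def using assms Int0_zero[of e V] by simp
  then show ?thesis by (auto simp: some_in_eq)
qed

lemma hh_add_hh_class:
  assumes "X \<in> Der0 sc e V" "Y \<in> Der0 sc e V"
  shows "hh_add sc e V (hh_class sc e V X) (hh_class sc e V Y) = hh_class sc e V (\<lambda>a. X a + Y a)"
proof -
  let ?X' = "SOME D. D \<in> hh_class sc e V X" and ?Y' = "SOME D. D \<in> hh_class sc e V Y"
  have "(\<lambda>a. (?X' a - X a) + (?Y' a - Y a)) \<in> Int0 sc e V"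
    using Int0_add some_in_hh_class[OF assms(1)] some_in_hh_class[OF assms(2)]
    unfolding hh_class_def by blast
  then have "(\<lambda>a. (?X' a + ?Y' a) - (X a + Y a)) \<in> Int0 sc e V"
    by (simp add: algebra_simps)
  then show ?thesis unfolding hh_add_def by (rule hh_class_eqI)
qed

lemma hh_scale_hh_class:
  assumes "X \<in> Der0 sc e V"
  shows "hh_scale sc e V c (hh_class sc e V X) = hh_class sc e V (\<lambda>a. sc c (X a))"
proof -
  let ?X' = "SOME D. D \<in> hh_class sc e V X"
  have "(\<lambda>a. sc c (?X' a - X a)) \<in> Int0 sc e V"
    using Int0_scale some_in_hh_class[OF assms] unfolding hh_class_def by blast
  then have "(\<lambda>a. sc c (?X' a) - sc c (X a)) \<in> Int0 sc e V"
    by (simp add: sc_right_diff_distrib)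
  then show ?thesis unfolding hh_scale_def by (rule hh_class_eqI)
qed

end

section \<open>Walks\<close>

definition inv_steps :: "('e \<times> bool) list \<Rightarrow> ('e \<times> bool) list" where
  "inv_steps l = rev (map (\<lambda>(a, b). (a, \<not> b)) l)"

lemma inv_steps_Nil [simp]: "inv_steps [] = []"
  by (simp add: inv_steps_def)

lemma inv_steps_Cons [simp]: "inv_steps (s # l) = inv_steps l @ [(fst s, \<not> snd s)]"
  by (cases s) (simp add: inv_steps_def)

lemma inv_steps_append [simp]: "inv_steps (l1 @ l2) = inv_steps l2 @ inv_steps l1"
  by (simp add: inv_steps_def)

lemma inv_steps_inv_steps [simp]: "inv_steps (inv_steps l) = l"
  by (induction l) auto

lemma ball_inv_steps: "(\<forall>s\<in>set (inv_steps l). P (fst s)) \<longleftrightarrow> (\<forall>s\<in>set l. P (fst s))"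
  by (induction l) auto

lemma winv_eq: "winv Q w = (wend Q w, inv_steps (snd w))"
  unfolding winv_def inv_steps_def ..

lemma walk_end_append [simp]: "walk_end Q x (l1 @ l2) = walk_end Q (walk_end Q x l1) l2"
  by (induction l1 arbitrary: x) auto

lemma walk_ok_append [simp]:
  "walk_ok Q x (l1 @ l2) \<longleftrightarrow> walk_ok Q x l1 \<and> walk_ok Q (walk_end Q x l1) l2"
  by (induction l1 arbitrary: x) auto

lemma walk_ok_inv_steps:
  "walk_ok Q x l \<Longrightarrow> walk_ok Q (walk_end Q x l) (inv_steps l) \<and> walk_end Q (walk_end Q x l) (inv_steps l) = x"
proof (induction l arbitrary: x)
  case (Cons s l)
  then show ?case by (cases s) auto
qed simp

lemma walk_ok_same_start: "walk_ok Q x l \<Longrightarrow> walk_ok Q y l \<Longrightarrow> l \<noteq> [] \<Longrightarrow> x = y"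
  by (cases l) auto

lemma is_walk_pair: "is_walk Q (x, l) \<longleftrightarrow> x \<in> verts Q \<and> (\<forall>s\<in>set l. fst s \<in> arrs Q) \<and> walk_ok Q x l"
  unfolding is_walk_def by simp

lemma wend_pair [simp]: "wend Q (x, l) = walk_end Q x l"
  unfolding wend_def by simp

lemma wstart_pair [simp]: "wstart (x, l) = x"
  unfolding wstart_def by simp

lemma trivial_is_path: "x \<in> verts Q \<Longrightarrow> is_path Q (x, [])"
  unfolding is_path_def is_walk_def by simp

context
  fixes Q :: "('v, 'e, 'm) quiver_scheme"
  assumes finite_Q: "finite_quiver Q"
begin

lemma walk_end_in_verts:
  "x \<in> verts Q \<Longrightarrow> \<forall>s\<in>set l. fst s \<in> arrs Q \<Longrightarrow> walk_ok Q x l \<Longrightarrow> walk_end Q x l \<in> verts Q"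
proof (induction l arbitrary: x)
  case (Cons s l)
  have "step_tgt Q s \<in> verts Q"
    using Cons.prems finite_Q unfolding finite_quiver_def by (cases s) auto
  then show ?case using Cons by auto
qed simp

lemma wend_in_verts: "is_walk Q w \<Longrightarrow> wend Q w \<in> verts Q"
  using walk_end_in_verts unfolding is_walk_def wend_def by blast

lemma is_walk_append:
  "is_walk Q (x, l1 @ l2) \<longleftrightarrow> is_walk Q (x, l1) \<and> is_walk Q (walk_end Q x l1, l2)"
  using walk_end_in_verts unfolding is_walk_pair by auto

lemma is_walk_inv_steps:
  assumes "is_walk Q (x, l)"
  shows "is_walk Q (walk_end Q x l, inv_steps l)" "walk_end Q (walk_end Q x l) (inv_steps l) = x"
  using walk_ok_inv_steps[of Q x l] walk_end_in_verts[of x l] assms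
  unfolding is_walk_pair ball_inv_steps[where P = "\<lambda>a. a \<in> arrs Q"] by auto

lemma is_walk_append_inv_steps: "is_walk Q (x, l) \<Longrightarrow> is_walk Q (x, l @ inv_steps l)"
  using is_walk_append is_walk_inv_steps by blast

lemma is_path_wcomp:
  "is_path Q u \<Longrightarrow> is_path Q v \<Longrightarrow> wend Q u = wstart v \<Longrightarrow> is_path Q (wcomp v u)"
  using is_walk_append[of "fst u" "snd u" "snd v"]
  unfolding is_path_def wcomp_def by (auto simp: wend_def wstart_def is_walk_def)

end

section \<open>Path algebra, presentations and homotopy\<close>

lemma pathalg_finite: "c \<in> pathalg Q \<Longrightarrow> finite {p. c p \<noteq> 0}"
  unfolding pathalg_def by blast

lemma pathalg_is_path: "c \<in> pathalg Q \<Longrightarrow> c p \<noteq> 0 \<Longrightarrow> is_path Q p"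
  unfolding pathalg_def by blast

lemma pathalg_restrict: "c \<in> pathalg Q \<Longrightarrow> (\<lambda>p. if p \<in> S then c p else 0) \<in> pathalg Q"
  unfolding pathalg_def by (auto elim: rev_finite_subset)

lemma pathalg_add:
  assumes "c \<in> pathalg Q" "d \<in> pathalg Q"
  shows "(\<lambda>p. c p + d p) \<in> pathalg Q"
proof -
  have "{p. c p + d p \<noteq> 0} \<subseteq> {p. c p \<noteq> 0} \<union> {p. d p \<noteq> 0}" by auto
  then have "finite {p. c p + d p \<noteq> 0}"
    using pathalg_finite[OF assms(1)] pathalg_finite[OF assms(2)] by (meson finite_UnI finite_subset)
  then show ?thesis using assms unfolding pathalg_def by force
qed

lemma pathalg_scale: "c \<in> pathalg Q \<Longrightarrow> (\<lambda>p. k * c p) \<in> pathalg Q"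
  unfolding pathalg_def by (auto elim: rev_finite_subset)

lemma pathalg_diff: "c \<in> pathalg Q \<Longrightarrow> d \<in> pathalg Q \<Longrightarrow> (\<lambda>p. c p - d p) \<in> pathalg Q"
  using pathalg_add[of c Q "\<lambda>p. - 1 * d p"] pathalg_scale[of d Q "- 1"] by simp

lemma pathalg_delta: "is_path Q q \<Longrightarrow> (\<lambda>p. if p = q then 1 else 0) \<in> pathalg Q"
  unfolding pathalg_def by simp

locale presented_quiver = k_algebra sc
  for sc :: "'k::field \<Rightarrow> 'a::ring_1 \<Rightarrow> 'a" +
  fixes Q :: "('v, 'e, 'm) quiver_scheme" and e :: "'v \<Rightarrow> 'a" and nu :: "('v, 'e) walk \<Rightarrow> 'a"
  assumes finite_Q: "finite_quiver Q" and presentation: "presentation Q sc e nu"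
begin

lemma nu_trivial_path: "x \<in> verts Q \<Longrightarrow> nu (x, []) = e x"
  using presentation unfolding presentation_def by blast

lemma nu_mult: "is_path Q u \<Longrightarrow> is_path Q v \<Longrightarrow>
    nu v * nu u = (if wend Q u = wstart v then nu (wcomp v u) else 0)"
  using presentation unfolding presentation_def by blast

lemma linext_surj: "\<exists>c\<in>pathalg Q. linext sc nu c = a"
  using presentation unfolding presentation_def by blast

lemma e_mult_nu: "x \<in> verts Q \<Longrightarrow> is_path Q p \<Longrightarrow> e x * nu p = (if wend Q p = x then nu p else 0)"
  using nu_mult[of p "(x, [])"] trivial_is_path[of x Q] nu_trivial_path[of x]
  by (auto simp: wcomp_def)

lemma nu_mult_e: "x \<in> verts Q \<Longrightarrow> is_path Q p \<Longrightarrow> nu p * e x = (if wstart p = x then nu p else 0)"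
  using nu_mult[of "(x, [])" p] trivial_is_path[of x Q] nu_trivial_path[of x]
  by (cases p) (auto simp: wcomp_def)

lemma min_relation_same_ends:
  assumes mr: "min_relation Q sc nu c" and "c u \<noteq> 0" "c v \<noteq> 0"
  shows "wstart u = wstart v \<and> wend Q u = wend Q v"
proof -
  have cp: "c \<in> pathalg Q" and rel: "linext sc nu c = 0"
    using mr unfolding min_relation_def by auto
  define x where "x = wstart u"
  define y where "y = wend Q u"
  have u: "is_path Q u" using pathalg_is_path[OF cp \<open>c u \<noteq> 0\<close>] .
  have xv: "x \<in> verts Q" using u unfolding x_def is_path_def is_walk_def wstart_def by auto
  have yv: "y \<in> verts Q" using wend_in_verts[OF finite_Q] u unfolding y_def is_path_def by blast
  define S where "S = {p. c p \<noteq> 0 \<and> wstart p = x \<and> wend Q p = y}"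
  text \<open>Cutting c down to the paths from x to y is multiplication by e y on the left and e x on the right.\<close>
  have "e y * linext sc nu c * e x = (\<Sum>p\<in>{p. c p \<noteq> 0}. sc (c p) (e y * nu p * e x))"
    unfolding linext_def
    by (simp add: sum_distrib_left sum_distrib_right mult_sc_left mult_sc_right mult.assoc)
  also have "\<dots> = (\<Sum>p\<in>{p. c p \<noteq> 0}. sc (if p \<in> S then c p else 0) (nu p))"
    using e_mult_nu[OF yv] nu_mult_e[OF xv] pathalg_is_path[OF cp]
    by (intro sum.cong) (auto simp: S_def)
  also have "\<dots> = linext sc nu (\<lambda>p. if p \<in> S then c p else 0)"
    by (rule linext_superset[OF pathalg_finite[OF cp], symmetric]) auto
  finally have "linext sc nu (\<lambda>p. if p \<in> S then c p else 0) = 0"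
    using rel by simp
  moreover have "u \<in> S" unfolding S_def x_def y_def using \<open>c u \<noteq> 0\<close> by auto
  moreover have "S \<subseteq> {p. c p \<noteq> 0}" unfolding S_def by auto
  ultimately have "S = {p. c p \<noteq> 0}"
    using mr unfolding min_relation_def by blast
  then have "v \<in> S" using \<open>c v \<noteq> 0\<close> by blast
  then show ?thesis unfolding S_def x_def y_def by auto
qed

lemma homot_same_ends:
  "homot Q sc nu a b \<Longrightarrow> is_walk Q a \<and> is_walk Q b \<and> wstart a = wstart b \<and> wend Q a = wend Q b"
proof (induction rule: homot.induct)
  case (inv_left a)
  then show ?case using finite_Q unfolding finite_quiver_def by (auto simp: is_walk_def)
next
  case (inv_right a)
  then show ?case using finite_Q unfolding finite_quiver_def by (auto simp: is_walk_def)
next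
  case (minrel c u v)
  then have "c \<in> pathalg Q" unfolding min_relation_def by auto
  then show ?case
    using min_relation_same_ends[OF minrel] pathalg_is_path minrel unfolding is_path_def by blast
next
  case (cong v v' w u)
  define z where "z = walk_end Q (fst u) (snd u)"
  have "walk_ok Q z (snd v)" "walk_ok Q z (snd v')"
    using cong.hyps(2,3) unfolding is_walk_def wcomp_def z_def by auto
  moreover have "walk_ok Q (fst v) (snd v)" "walk_ok Q (fst v') (snd v')"
    using cong.IH unfolding is_walk_def by auto
  ultimately have "walk_end Q z (snd v) = walk_end Q z (snd v')"
  proof (cases "snd v = [] \<and> snd v' = []")
    case False
    then have "z = fst v" using cong.IH walk_ok_same_start
      by (metis \<open>walk_ok Q z (snd v)\<close> \<open>walk_ok Q z (snd v')\<close> \<open>walk_ok Q (fst v) (snd v)\<close>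
          \<open>walk_ok Q (fst v') (snd v')\<close> wstart_def)
    then show ?thesis using cong.IH by (auto simp: wend_def wstart_def)
  qed simp
  then show ?case using cong.hyps(2,3) by (simp add: wcomp_def wend_def wstart_def z_def)
qed auto

lemma hclass_eq: "homot Q sc nu a b \<Longrightarrow> hclass Q sc nu a = hclass Q sc nu b"
  unfolding hclass_def by (auto intro: homot.trans homot.sym)

lemma homot_cong_middle:
  assumes "homot Q sc nu (y, m) (y', m')" "is_walk Q (x, l1 @ m @ l2)" "is_walk Q (x, l1 @ m' @ l2)"
  shows "homot Q sc nu (x, l1 @ m @ l2) (x, l1 @ m' @ l2)"
  using homot.cong[OF assms(1), of "(x, l2)" "(x, l1)"] assms(2,3) by (simp add: wcomp_def)

lemma homot_append:
  assumes h1: "homot Q sc nu (x, m1) (x', m1')" and h2: "homot Q sc nu (y, m2) (y', m2')"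
    and "is_walk Q (x, m1 @ m2)" "is_walk Q (x, m1' @ m2')"
  shows "homot Q sc nu (x, m1 @ m2) (x, m1' @ m2')"
proof -
  have "x' = x" "walk_end Q x m1' = walk_end Q x m1" "is_walk Q (x, m1')"
    using homot_same_ends[OF h1] by auto
  then have "is_walk Q (x, m1' @ m2)"
    using assms(3) is_walk_append[OF finite_Q] by metis
  then have "homot Q sc nu (x, [] @ m1 @ m2) (x, [] @ m1' @ m2)"
    using homot_cong_middle[OF h1, of x "[]" m2] assms(3) by simp
  moreover have "homot Q sc nu (x, m1' @ m2 @ []) (x, m1' @ m2' @ [])"
    using homot_cong_middle[OF h2, of x m1' "[]"] assms(4) \<open>is_walk Q (x, m1' @ m2)\<close> by simp
  ultimately show ?thesis using homot.trans by fastforce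
qed

lemma homot_cancel_inverse: "is_walk Q (x, l) \<Longrightarrow> homot Q sc nu (x, l @ inv_steps l) (x, [])"
proof (induction l arbitrary: x)
  case Nil
  then show ?case by (simp add: homot.refl)
next
  case (Cons s l)
  obtain a b where s: "s = (a, b)" by (cases s)
  have x: "x = step_src Q s" and a: "a \<in> arrs Q" using Cons.prems s by (auto simp: is_walk_def)
  have s_walk: "is_walk Q (x, [s])" and l: "is_walk Q (step_tgt Q s, l)"
    using Cons.prems is_walk_append[OF finite_Q, of x "[s]" l] by simp_all
  have "is_walk Q (x, [s] @ (l @ inv_steps l) @ [(a, \<not> b)])"
    using is_walk_append_inv_steps[OF finite_Q Cons.prems] s by simp
  moreover have "is_walk Q (x, [s] @ [] @ [(a, \<not> b)])"
    using is_walk_append_inv_steps[OF finite_Q s_walk] s by simp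
  ultimately have "homot Q sc nu (x, [s] @ (l @ inv_steps l) @ [(a, \<not> b)]) (x, [s] @ [] @ [(a, \<not> b)])"
    by (rule homot_cong_middle[OF Cons.IH[OF l]])
  then have "homot Q sc nu (x, (s # l) @ inv_steps (s # l)) (x, [(a, b), (a, \<not> b)])"
    using s by simp
  moreover have "homot Q sc nu (x, [(a, b), (a, \<not> b)]) (x, [])"
    using homot.inv_left[OF a] homot.inv_right[OF a] x s by (cases b) auto
  ultimately show ?case by (rule homot.trans)
qed

lemma k_linear_eq_on_paths:
  assumes "k_linear D1" "k_linear D2" "\<And>p. is_path Q p \<Longrightarrow> D1 (nu p) = D2 (nu p)"
  shows "D1 = D2"
proof
  fix a
  obtain c where c: "c \<in> pathalg Q" "linext sc nu c = a" using linext_surj by blast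
  have "D1 a = linext sc (\<lambda>p. D1 (nu p)) c" using k_linear_linext[OF assms(1)] c(2) by blast
  also have "\<dots> = linext sc (\<lambda>p. D2 (nu p)) c"
    using assms(3) pathalg_is_path[OF c(1)] by (intro linext_cong) auto
  also have "\<dots> = D2 a" using k_linear_linext[OF assms(2)] c(2) by metis
  finally show "D1 a = D2 a" .
qed

section \<open>Diagonal derivations\<close>

definition respects_min_relations :: "(('v, 'e) walk \<Rightarrow> 'k) \<Rightarrow> bool" where
  "respects_min_relations w \<longleftrightarrow>
     (\<forall>c u v. min_relation Q sc nu c \<and> c u \<noteq> 0 \<and> c v \<noteq> 0 \<longrightarrow> w u = w v)"

definition additive_on_paths :: "(('v, 'e) walk \<Rightarrow> 'k) \<Rightarrow> bool" where
  "additive_on_paths w \<longleftrightarrow>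
     (\<forall>p q. is_path Q p \<and> is_path Q q \<and> wend Q p = wstart q \<longrightarrow> w (wcomp q p) = w q + w p)"

lemma weighted_linext_eq_0:
  assumes w: "respects_min_relations w" and "c \<in> pathalg Q" "linext sc nu c = 0"
  shows "linext sc (\<lambda>p. sc (w p) (nu p)) c = 0"
  using assms(2,3)
proof (induction "card {p. c p \<noteq> 0}" arbitrary: c rule: less_induct)
  case less
  note c = less.prems(1) and rel = less.prems(2)
  let ?W = "\<lambda>p. sc (w p) (nu p)"
  consider "{p. c p \<noteq> 0} = {}" | "min_relation Q sc nu c"
    | S where "S \<subseteq> {p. c p \<noteq> 0}" "S \<noteq> {}" "S \<noteq> {p. c p \<noteq> 0}"
        "linext sc nu (\<lambda>p. if p \<in> S then c p else 0) = 0"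
    using c rel unfolding min_relation_def by blast
  then show ?case
  proof cases
    case 1
    then show ?thesis unfolding linext_def by (simp only: sum.empty)
  next
    case 2
    then obtain p0 where "c p0 \<noteq> 0" unfolding min_relation_def by blast
    then have "linext sc ?W c = linext sc (\<lambda>p. sc (w p0) (nu p)) c"
      using w 2 unfolding respects_min_relations_def by (intro linext_cong) metis
    also have "\<dots> = 0" using rel by (simp add: linext_sc_fun)
    finally show ?thesis .
  next
    case (3 S)
    text \<open>A relation that is not minimal is the sum of two relations with smaller support.\<close>
    define c1 where "c1 = (\<lambda>p. if p \<in> S then c p else 0)"
    define c2 where "c2 = (\<lambda>p. if p \<in> - S then c p else 0)"
    have c12: "c = (\<lambda>p. c1 p + c2 p)" unfolding c1_def c2_def by auto
    have c1: "c1 \<in> pathalg Q" and c2: "c2 \<in> pathalg Q"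
      unfolding c1_def c2_def using pathalg_restrict[OF c] by blast+
    have fin: "finite {p. c p \<noteq> 0}" using pathalg_finite[OF c] .
    have "{p. c1 p \<noteq> 0} = S" "{p. c2 p \<noteq> 0} = {p. c p \<noteq> 0} - S"
      unfolding c1_def c2_def using 3(1) by auto
    then have card: "card {p. c1 p \<noteq> 0} < card {p. c p \<noteq> 0}" "card {p. c2 p \<noteq> 0} < card {p. c p \<noteq> 0}"
      using 3(1-3) fin by (auto intro!: psubset_card_mono)
    have add: "linext sc F c = linext sc F c1 + linext sc F c2" for F
      by (subst c12) (rule linext_add[OF pathalg_finite[OF c1] pathalg_finite[OF c2]])
    have rel1: "linext sc nu c1 = 0" using 3(4) unfolding c1_def .
    then have rel2: "linext sc nu c2 = 0" using rel add[of nu] by simp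
    show ?thesis using add[of ?W] less.hyps[OF card(1) c1 rel1] less.hyps[OF card(2) c2 rel2] by simp
  qed
qed

lemma additive_on_paths_trivial:
  assumes "additive_on_paths w" "x \<in> verts Q"
  shows "w (x, []) = 0"
proof -
  have "w (wcomp (x, []) (x, [])) = w (x, []) + w (x, [])"
    using assms trivial_is_path unfolding additive_on_paths_def
    by (metis wend_pair wstart_pair walk_end.simps(1))
  then have "w (x, []) = w (x, []) + w (x, [])"
    by (simp only: wcomp_def fst_conv snd_conv append_Nil)
  then show ?thesis by (metis add_cancel_right_right)
qed

text \<open>The choice of preimage is irrelevant when w respects minimal relations (see diag_op_linext).\<close>
definition diag_op :: "(('v, 'e) walk \<Rightarrow> 'k) \<Rightarrow> 'a \<Rightarrow> 'a" where
  "diag_op w a = linext sc (\<lambda>p. sc (w p) (nu p)) (SOME c. c \<in> pathalg Q \<and> linext sc nu c = a)"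

lemma diag_op_add: "diag_op (\<lambda>p. w1 p + w2 p) = (\<lambda>a. diag_op w1 a + diag_op w2 a)"
  unfolding diag_op_def by (simp add: sc_left_distrib linext_add_fun)

lemma diag_op_scale: "diag_op (\<lambda>p. k * w p) = (\<lambda>a. sc k (diag_op w a))"
  unfolding diag_op_def by (simp add: sc_sc[symmetric] linext_sc_fun)

lemma diag_op_zero: "diag_op (\<lambda>p. 0) = (\<lambda>a. 0)"
  unfolding diag_op_def linext_def by simp

context
  fixes w :: "('v, 'e) walk \<Rightarrow> 'k"
  assumes w: "respects_min_relations w"
begin

lemma diag_op_linext:
  assumes c: "c \<in> pathalg Q"
  shows "diag_op w (linext sc nu c) = linext sc (\<lambda>p. sc (w p) (nu p)) c"
proof -
  define c' where "c' = (SOME c'. c' \<in> pathalg Q \<and> linext sc nu c' = linext sc nu c)"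
  have "c' \<in> pathalg Q \<and> linext sc nu c' = linext sc nu c"
    unfolding c'_def by (rule someI[of _ c]) (use c in simp)
  then have c': "c' \<in> pathalg Q" and "linext sc nu c' = linext sc nu c" by auto
  then have "linext sc nu (\<lambda>p. c' p - c p) = 0"
    by (simp add: linext_diff pathalg_finite[OF c] pathalg_finite[OF c'])
  then have "linext sc (\<lambda>p. sc (w p) (nu p)) (\<lambda>p. c' p - c p) = 0"
    by (rule weighted_linext_eq_0[OF w pathalg_diff[OF c' c]])
  then show ?thesis
    unfolding diag_op_def c'_def[symmetric] by (simp add: linext_diff pathalg_finite[OF c] pathalg_finite[OF c'])
qed

lemma diag_op_nu: "is_path Q p \<Longrightarrow> diag_op w (nu p) = sc (w p) (nu p)"
  using diag_op_linext[OF pathalg_delta, of p] by (simp add: linext_delta)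

lemma diag_op_k_linear: "k_linear (diag_op w)"
  unfolding k_linear_def
proof (intro conjI allI)
  fix a b
  obtain c d where c: "c \<in> pathalg Q" "linext sc nu c = a" and d: "d \<in> pathalg Q" "linext sc nu d = b"
    using linext_surj by meson
  show "diag_op w (a + b) = diag_op w a + diag_op w b"
    using diag_op_linext[OF pathalg_add[OF c(1) d(1)]] diag_op_linext[OF c(1)] diag_op_linext[OF d(1)]
    by (simp add: c(2)[symmetric] d(2)[symmetric] linext_add pathalg_finite[OF c(1)] pathalg_finite[OF d(1)])
next
  fix k a
  obtain c where c: "c \<in> pathalg Q" "linext sc nu c = a" using linext_surj by blast
  show "diag_op w (sc k a) = sc k (diag_op w a)"
    using diag_op_linext[OF pathalg_scale[OF c(1)]] diag_op_linext[OF c(1)]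
    by (simp add: c(2)[symmetric] linext_scale pathalg_finite[OF c(1)])
qed

lemma diag_op_mult_nu:
  assumes additive: "additive_on_paths w" and p: "is_path Q p" and q: "is_path Q q"
  shows "diag_op w (nu p * nu q) = diag_op w (nu p) * nu q + nu p * diag_op w (nu q)"
proof -
  have "diag_op w (nu p) * nu q + nu p * diag_op w (nu q) = sc (w p + w q) (nu p * nu q)"
    by (simp add: diag_op_nu p q mult_sc_left mult_sc_right sc_left_distrib)
  moreover have "diag_op w (nu p * nu q) = sc (w p + w q) (nu p * nu q)"
  proof (cases "wend Q q = wstart p")
    case True
    then show ?thesis
      using nu_mult[OF q p] diag_op_nu[OF is_path_wcomp[OF finite_Q q p True]] additive p q
      unfolding additive_on_paths_def by simp
  next
    case False
    then show ?thesis using nu_mult[OF q p] k_linear_zero[OF diag_op_k_linear] by simp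
  qed
  ultimately show ?thesis by simp
qed

lemma diag_op_leibniz:
  assumes "additive_on_paths w"
  shows "diag_op w (a * b) = diag_op w a * b + a * diag_op w b"
proof -
  note L = diag_op_k_linear
  have left_linear: "k_linear (\<lambda>a. diag_op w (a * b))" "k_linear (\<lambda>a. diag_op w a * b + a * diag_op w b)"
    for b
    unfolding k_linear_def
    by (simp_all add: distrib_right k_linear_add[OF L] mult_sc_left k_linear_sc[OF L] sc_right_distrib)
  have right_linear: "k_linear (\<lambda>b. diag_op w (a * b))" "k_linear (\<lambda>b. diag_op w a * b + a * diag_op w b)"
    for a
    unfolding k_linear_def
    by (simp_all add: distrib_left k_linear_add[OF L] mult_sc_right k_linear_sc[OF L] sc_right_distrib)
  text \<open>Both sides are bilinear, so it suffices to compare them on pairs of paths.\<close>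
  have "(\<lambda>b. diag_op w (nu p * b)) = (\<lambda>b. diag_op w (nu p) * b + nu p * diag_op w b)" if "is_path Q p" for p
    using diag_op_mult_nu[OF assms that] by (intro k_linear_eq_on_paths right_linear)
  then have "(\<lambda>a. diag_op w (a * b)) = (\<lambda>a. diag_op w a * b + a * diag_op w b)"
    by (intro k_linear_eq_on_paths left_linear) meson
  then show ?thesis by meson
qed

lemma diag_op_in_Der0:
  assumes "additive_on_paths w"
  shows "diag_op w \<in> Der0 sc e (verts Q)"
  unfolding Der0_def
  using k_linear_add[OF diag_op_k_linear] k_linear_sc[OF diag_op_k_linear] diag_op_leibniz[OF assms]
    diag_op_nu[OF trivial_is_path] nu_trivial_path additive_on_paths_trivial[OF assms]
  by auto

end

definition path_diagonal :: "('a \<Rightarrow> 'a) \<Rightarrow> bool" where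
  "path_diagonal D \<longleftrightarrow> (\<forall>p. is_path Q p \<longrightarrow> (\<exists>\<alpha>. D (nu p) = sc \<alpha> (nu p)))"

lemma diag_op_path_diagonal: "respects_min_relations w \<Longrightarrow> path_diagonal (diag_op w)"
  unfolding path_diagonal_def using diag_op_nu by blast

lemma path_diagonal_commute:
  assumes "k_linear D1" "path_diagonal D1" "k_linear D2" "path_diagonal D2"
  shows "(\<lambda>a. D1 (D2 a) - D2 (D1 a)) = (\<lambda>a. 0)"
proof (rule k_linear_eq_on_paths)
  show "k_linear (\<lambda>a. D1 (D2 a) - D2 (D1 a))"
    using assms(1,3) unfolding k_linear_def by (simp add: sc_right_diff_distrib)
  show "k_linear (\<lambda>a. 0)" unfolding k_linear_def by simp
  fix p assume "is_path Q p"
  then obtain \<alpha> \<beta> where "D1 (nu p) = sc \<alpha> (nu p)" "D2 (nu p) = sc \<beta> (nu p)"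
    using assms(2,4) unfolding path_diagonal_def by blast
  then show "D1 (D2 (nu p)) - D2 (D1 (nu p)) = 0"
    using k_linear_sc[OF assms(1)] k_linear_sc[OF assms(3)] sc_commute by simp
qed

lemma idempotent_comb_mult_nu:
  assumes p: "is_path Q p"
  shows "(\<Sum>x\<in>verts Q. sc (l x) (e x)) * nu p = sc (l (wend Q p)) (nu p)"
proof -
  have "wend Q p \<in> verts Q" using p wend_in_verts[OF finite_Q] unfolding is_path_def by blast
  have "(\<Sum>x\<in>verts Q. sc (l x) (e x)) * nu p = (\<Sum>x\<in>verts Q. sc (l x) (e x * nu p))"
    by (simp add: sum_distrib_right mult_sc_left)
  also have "\<dots> = (\<Sum>x\<in>verts Q. if x = wend Q p then sc (l x) (nu p) else 0)"
    by (rule sum.cong) (auto simp: e_mult_nu[OF _ p])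
  also have "\<dots> = sc (l (wend Q p)) (nu p)"
    using \<open>wend Q p \<in> verts Q\<close> finite_Q unfolding finite_quiver_def by simp
  finally show ?thesis .
qed

lemma nu_mult_idempotent_comb:
  assumes p: "is_path Q p"
  shows "nu p * (\<Sum>x\<in>verts Q. sc (l x) (e x)) = sc (l (wstart p)) (nu p)"
proof -
  have "wstart p \<in> verts Q" using p unfolding is_path_def is_walk_def wstart_def by blast
  have "nu p * (\<Sum>x\<in>verts Q. sc (l x) (e x)) = (\<Sum>x\<in>verts Q. sc (l x) (nu p * e x))"
    by (simp add: sum_distrib_left mult_sc_right)
  also have "\<dots> = (\<Sum>x\<in>verts Q. if x = wstart p then sc (l x) (nu p) else 0)"
    by (rule sum.cong) (auto simp: nu_mult_e[OF _ p])
  also have "\<dots> = sc (l (wstart p)) (nu p)"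
    using \<open>wstart p \<in> verts Q\<close> finite_Q unfolding finite_quiver_def by simp
  finally show ?thesis .
qed

lemma Int0_path_diagonal: "I \<in> Int0 sc e (verts Q) \<Longrightarrow> path_diagonal I"
  unfolding Int0_iff path_diagonal_def
  by (auto simp: idempotent_comb_mult_nu nu_mult_idempotent_comb sc_left_diff_distrib[symmetric])

lemma path_diagonal_Int0_shift:
  assumes "path_diagonal X" "(\<lambda>a. D a - X a) \<in> Int0 sc e (verts Q)"
  shows "path_diagonal D"
proof -
  have "\<exists>\<alpha>. D (nu p) = sc \<alpha> (nu p)" if "is_path Q p" for p
  proof -
    obtain \<alpha> \<beta> where "X (nu p) = sc \<alpha> (nu p)" "D (nu p) - X (nu p) = sc \<beta> (nu p)"
      using assms Int0_path_diagonal[OF assms(2)] \<open>is_path Q p\<close> unfolding path_diagonal_def by blast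
    then have "D (nu p) = sc (\<alpha> + \<beta>) (nu p)" by (simp add: sc_left_distrib algebra_simps)
    then show ?thesis ..
  qed
  then show ?thesis unfolding path_diagonal_def by blast
qed

lemma hh_bracket_path_diagonal:
  assumes "X \<in> Der0 sc e (verts Q)" "path_diagonal X" "Y \<in> Der0 sc e (verts Q)" "path_diagonal Y"
  shows "hh_bracket sc e (verts Q) (hh_class sc e (verts Q) X) (hh_class sc e (verts Q) Y)
    = hh_class sc e (verts Q) (\<lambda>a. 0)"
proof -
  define X' where "X' = (SOME D. D \<in> hh_class sc e (verts Q) X)"
  define Y' where "Y' = (SOME D. D \<in> hh_class sc e (verts Q) Y)"
  have X': "X' \<in> Der0 sc e (verts Q)" "(\<lambda>a. X' a - X a) \<in> Int0 sc e (verts Q)"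
    using some_in_hh_class[OF assms(1)] unfolding X'_def hh_class_def by auto
  have Y': "Y' \<in> Der0 sc e (verts Q)" "(\<lambda>a. Y' a - Y a) \<in> Int0 sc e (verts Q)"
    using some_in_hh_class[OF assms(3)] unfolding Y'_def hh_class_def by auto
  have "(\<lambda>a. X' (Y' a) - Y' (X' a)) = (\<lambda>a. 0)"
    using Der0_k_linear[OF X'(1)] path_diagonal_Int0_shift[OF assms(2) X'(2)]
      Der0_k_linear[OF Y'(1)] path_diagonal_Int0_shift[OF assms(4) Y'(2)]
    by (rule path_diagonal_commute)
  then show ?thesis unfolding hh_bracket_def Let_def X'_def[symmetric] Y'_def[symmetric] by simp
qed

end

section \<open>Derivations from the fundamental group\<close>

lemma hom_kplus_add: "f \<in> hom G kplus \<Longrightarrow> g \<in> hom G kplus \<Longrightarrow> (\<lambda>C. f C + g C) \<in> hom G kplus"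
  unfolding hom_def kplus_def by (auto simp: algebra_simps)

lemma hom_kplus_scale: "f \<in> hom G kplus \<Longrightarrow> (\<lambda>C. c * f C) \<in> hom G kplus"
  unfolding hom_def kplus_def by (auto simp: algebra_simps)

lemma hom_kplus_zero: "(\<lambda>C. 0) \<in> hom G kplus"
  unfolding hom_def kplus_def by auto

locale based_presented_quiver = presented_quiver sc Q e nu
  for sc :: "'k::field \<Rightarrow> 'a::ring_1 \<Rightarrow> 'a" and Q :: "('v, 'e, 'm) quiver_scheme"
    and e :: "'v \<Rightarrow> 'a" and nu :: "('v, 'e) walk \<Rightarrow> 'a" +
  fixes T :: "'e set" and x0 :: 'v
  assumes x0: "x0 \<in> verts Q" and max_tree: "max_tree Q T"
begin

abbreviation gamma_steps :: "'v \<Rightarrow> ('e \<times> bool) list" where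
  "gamma_steps x \<equiv> snd (gamma Q T x0 x)"

lemma gamma_steps_walk:
  assumes "x \<in> verts Q"
  shows "is_walk Q (x0, gamma_steps x)" "walk_end Q x0 (gamma_steps x) = x"
proof -
  have "\<exists>!ws. tree_walk Q T x0 x ws" using max_tree x0 assms unfolding max_tree_def by blast
  then have "tree_walk Q T x0 x (THE ws. tree_walk Q T x0 x ws)" by (rule theI')
  then show "is_walk Q (x0, gamma_steps x)" "walk_end Q x0 (gamma_steps x) = x"
    unfolding gamma_def tree_walk_def by simp_all
qed

text \<open>The closed walk gamma_y^-1 u gamma_x of the paper, for u from x to y.\<close>
definition tree_loop :: "('v, 'e) walk \<Rightarrow> ('v, 'e) walk" where
  "tree_loop u = (x0, gamma_steps (wstart u) @ snd u @ inv_steps (gamma_steps (wend Q u)))"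

lemma tree_loop_closed_walk:
  assumes "is_walk Q u"
  shows "is_walk Q (tree_loop u)" "wend Q (tree_loop u) = x0"
proof -
  have x: "wstart u \<in> verts Q" and y: "wend Q u \<in> verts Q"
    using assms wend_in_verts[OF finite_Q] unfolding is_walk_def wstart_def by auto
  have u: "is_walk Q (wstart u, snd u)" "walk_end Q (wstart u) (snd u) = wend Q u"
    using assms by (auto simp: wstart_def wend_def)
  have loop_back: "is_walk Q (wend Q u, inv_steps (gamma_steps (wend Q u)))"
      "walk_end Q (wend Q u) (inv_steps (gamma_steps (wend Q u))) = x0"
    using is_walk_inv_steps[OF finite_Q gamma_steps_walk(1)[OF y]] gamma_steps_walk(2)[OF y] by simp_all
  show "is_walk Q (tree_loop u)" "wend Q (tree_loop u) = x0"
    using gamma_steps_walk[OF x] u loop_back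
    unfolding tree_loop_def by (simp_all add: is_walk_append[OF finite_Q])
qed

lemma hclass_in_pi1:
  "is_walk Q w \<Longrightarrow> wstart w = x0 \<Longrightarrow> wend Q w = x0 \<Longrightarrow> hclass Q sc nu w \<in> carrier (pi1 Q sc nu x0)"
  unfolding pi1_def partial_object.simps by blast

definition pi1_weight :: "(('v, 'e) walk set \<Rightarrow> 'k) \<Rightarrow> ('v, 'e) walk \<Rightarrow> 'k" where
  "pi1_weight f u = f (hclass Q sc nu (tree_loop u))"

lemma pi1_weight_def':
  "pi1_weight f u = f (hclass Q sc nu
     (wcomp (winv Q (gamma Q T x0 (wend Q u))) (wcomp u (gamma Q T x0 (wstart u)))))"
  unfolding pi1_weight_def tree_loop_def wcomp_def winv_eq gamma_def by simp

lemma pi1_weight_respects_min_relations: "respects_min_relations (pi1_weight f)"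
  unfolding respects_min_relations_def
proof (intro allI impI, elim conjE)
  fix c u v assume mr: "min_relation Q sc nu c" and "c u \<noteq> 0" "c v \<noteq> 0"
  then have h: "homot Q sc nu u v" by (rule homot.minrel)
  have ends: "wstart u = wstart v" "wend Q u = wend Q v"
    using min_relation_same_ends[OF mr \<open>c u \<noteq> 0\<close> \<open>c v \<noteq> 0\<close>] by auto
  have "is_walk Q (tree_loop u)" "is_walk Q (tree_loop v)"
    using homot_same_ends[OF h] tree_loop_closed_walk(1) by auto
  then have "homot Q sc nu (tree_loop u) (tree_loop v)"
    unfolding tree_loop_def ends
    by (intro homot_cong_middle[of "fst u" "snd u" "fst v" "snd v"]) (simp_all add: h)
  then show "pi1_weight f u = pi1_weight f v" unfolding pi1_weight_def by (simp add: hclass_eq)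
qed

lemma hom_pi1_append:
  assumes f: "f \<in> hom (pi1 Q sc nu x0) kplus"
    and w1: "is_walk Q w1" "wstart w1 = x0" "wend Q w1 = x0"
    and w2: "is_walk Q w2" "wstart w2 = x0" "wend Q w2 = x0"
  shows "f (hclass Q sc nu (x0, snd w1 @ snd w2)) = f (hclass Q sc nu w1) + f (hclass Q sc nu w2)"
proof -
  let ?C = "hclass Q sc nu w2" and ?D = "hclass Q sc nu w1"
  have C: "?C \<in> carrier (pi1 Q sc nu x0)" and D: "?D \<in> carrier (pi1 Q sc nu x0)"
    using hclass_in_pi1 w1 w2 by blast+
  obtain a where a: "a \<in> ?C" "(SOME w. w \<in> ?C) = a"
    using someI[of "\<lambda>w. w \<in> ?C" w2] homot.refl[OF w2(1)] unfolding hclass_def by blast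
  obtain b where b: "b \<in> ?D" "(SOME w. w \<in> ?D) = b"
    using someI[of "\<lambda>w. w \<in> ?D" w1] homot.refl[OF w1(1)] unfolding hclass_def by blast
  have "w1 = (x0, snd w1)" "w2 = (x0, snd w2)"
    using w1(2) w2(2) by (simp_all add: wstart_def prod_eq_iff)
  then have ha: "homot Q sc nu (x0, snd w2) (fst a, snd a)" and hb: "homot Q sc nu (x0, snd w1) (fst b, snd b)"
    using a(1) b(1) unfolding hclass_def by (metis mem_Collect_eq prod.collapse)+
  have "is_walk Q a" "wstart a = x0" "wend Q a = x0" "is_walk Q b" "wstart b = x0" "wend Q b = x0"
    using a(1) b(1) homot_same_ends w1 w2 unfolding hclass_def by auto
  then have "is_walk Q (x0, snd w1 @ snd w2)" "is_walk Q (x0, snd b @ snd a)"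
    using w1 w2 is_walk_append[OF finite_Q] by (auto simp: wstart_def wend_def is_walk_def)
  then have "homot Q sc nu (x0, snd w1 @ snd w2) (x0, snd b @ snd a)"
    by (rule homot_append[OF hb ha])
  moreover have "wcomp a b = (x0, snd b @ snd a)"
    using \<open>wstart b = x0\<close> unfolding wcomp_def wstart_def by simp
  ultimately have "hclass Q sc nu (x0, snd w1 @ snd w2) = ?C \<otimes>\<^bsub>pi1 Q sc nu x0\<^esub> ?D"
    using a(2) b(2) unfolding pi1_def by (simp add: hclass_eq)
  then show ?thesis using f C D unfolding hom_def kplus_def by (simp add: add.commute)
qed

lemma pi1_weight_additive:
  assumes f: "f \<in> hom (pi1 Q sc nu x0) kplus"
  shows "additive_on_paths (pi1_weight f)"
  unfolding additive_on_paths_def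
proof (intro allI impI, elim conjE)
  fix p q assume p: "is_path Q p" and q: "is_path Q q" and pq: "wend Q p = wstart q"
  define y where "y = wend Q p"
  have pw: "is_walk Q p" and qw: "is_walk Q q" and qpw: "is_walk Q (wcomp q p)"
    using p q is_path_wcomp[OF finite_Q p q pq] unfolding is_path_def by auto
  have qp: "wstart (wcomp q p) = wstart p" "wend Q (wcomp q p) = wend Q q" "snd (wcomp q p) = snd p @ snd q"
    using pq by (auto simp: wcomp_def wstart_def wend_def)
  have y: "y \<in> verts Q" using wend_in_verts[OF finite_Q pw] unfolding y_def .
  have "is_walk Q (y, inv_steps (gamma_steps y))"
    using is_walk_inv_steps[OF finite_Q gamma_steps_walk(1)[OF y]] gamma_steps_walk(2)[OF y] by simp
  text \<open>The detour back to x0 between p and q cancels.\<close>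
  then have "homot Q sc nu (y, inv_steps (gamma_steps y) @ gamma_steps y) (y, [])"
    using homot_cancel_inverse[of y "inv_steps (gamma_steps y)"] by simp
  moreover have "is_walk Q (x0, (gamma_steps (wstart p) @ snd p) @ (inv_steps (gamma_steps y) @ gamma_steps y)
      @ (snd q @ inv_steps (gamma_steps (wend Q q))))"
    using tree_loop_closed_walk[OF pw] tree_loop_closed_walk(1)[OF qw]
    unfolding tree_loop_def y_def pq by (simp add: is_walk_append[OF finite_Q])
  ultimately have "homot Q sc nu (x0, snd (tree_loop p) @ snd (tree_loop q)) (tree_loop (wcomp q p))"
    using homot_cong_middle tree_loop_closed_walk(1)[OF qpw]
    unfolding tree_loop_def qp y_def pq by fastforce
  then have "pi1_weight f (wcomp q p) = f (hclass Q sc nu (x0, snd (tree_loop p) @ snd (tree_loop q)))"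
    unfolding pi1_weight_def by (simp add: hclass_eq)
  also have "\<dots> = pi1_weight f p + pi1_weight f q"
    using hom_pi1_append[OF f tree_loop_closed_walk(1)[OF pw] _ tree_loop_closed_walk(2)[OF pw]
        tree_loop_closed_walk(1)[OF qw] _ tree_loop_closed_walk(2)[OF qw]]
    unfolding pi1_weight_def by (simp add: tree_loop_def)
  finally show "pi1_weight f (wcomp q p) = pi1_weight f q + pi1_weight f p" by (simp add: add.commute)
qed

lemma is_ftilde_diag_op:
  assumes f: "f \<in> hom (pi1 Q sc nu x0) kplus"
  shows "is_ftilde Q sc e nu T x0 f (diag_op (pi1_weight f))"
  unfolding is_ftilde_def pi1_weight_def'[symmetric]
  using diag_op_in_Der0[OF pi1_weight_respects_min_relations pi1_weight_additive[OF f]]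
    diag_op_nu[OF pi1_weight_respects_min_relations] by blast

lemma theta_eq_hh_class:
  assumes f: "f \<in> hom (pi1 Q sc nu x0) kplus"
  shows "theta Q sc e nu T x0 f = hh_class sc e (verts Q) (diag_op (pi1_weight f))"
proof -
  have "is_ftilde Q sc e nu T x0 f (ftilde Q sc e nu T x0 f)"
    unfolding ftilde_def using is_ftilde_diag_op[OF f] by (rule someI[of "is_ftilde Q sc e nu T x0 f"])
  then have "ftilde Q sc e nu T x0 f = diag_op (pi1_weight f)"
    unfolding is_ftilde_def pi1_weight_def'[symmetric]
    by (intro k_linear_eq_on_paths Der0_k_linear diag_op_k_linear pi1_weight_respects_min_relations)
      (auto simp: diag_op_nu[OF pi1_weight_respects_min_relations])
  then show ?thesis unfolding theta_def by simp
qed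

lemma diag_op_pi1_weight_in_Der0:
  "f \<in> hom (pi1 Q sc nu x0) kplus \<Longrightarrow> diag_op (pi1_weight f) \<in> Der0 sc e (verts Q)"
  using is_ftilde_diag_op unfolding is_ftilde_def by blast

lemma theta_add:
  assumes f: "f \<in> hom (pi1 Q sc nu x0) kplus" and g: "g \<in> hom (pi1 Q sc nu x0) kplus"
  shows "theta Q sc e nu T x0 (\<lambda>C. f C + g C)
    = hh_add sc e (verts Q) (theta Q sc e nu T x0 f) (theta Q sc e nu T x0 g)"
proof -
  have "pi1_weight (\<lambda>C. f C + g C) = (\<lambda>u. pi1_weight f u + pi1_weight g u)"
    by (simp add: pi1_weight_def fun_eq_iff)
  then show ?thesis
    using hh_add_hh_class[OF diag_op_pi1_weight_in_Der0[OF f] diag_op_pi1_weight_in_Der0[OF g]]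
    by (simp add: theta_eq_hh_class f g hom_kplus_add diag_op_add)
qed

lemma theta_scale:
  assumes f: "f \<in> hom (pi1 Q sc nu x0) kplus"
  shows "theta Q sc e nu T x0 (\<lambda>C. c * f C) = hh_scale sc e (verts Q) c (theta Q sc e nu T x0 f)"
proof -
  have "pi1_weight (\<lambda>C. c * f C) = (\<lambda>u. c * pi1_weight f u)"
    by (simp add: pi1_weight_def fun_eq_iff)
  then show ?thesis
    using hh_scale_hh_class[OF diag_op_pi1_weight_in_Der0[OF f]]
    by (simp add: theta_eq_hh_class f hom_kplus_scale diag_op_scale)
qed

lemma theta_bracket:
  assumes f: "f \<in> hom (pi1 Q sc nu x0) kplus" and g: "g \<in> hom (pi1 Q sc nu x0) kplus"
  shows "hh_bracket sc e (verts Q) (theta Q sc e nu T x0 f) (theta Q sc e nu T x0 g)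
    = theta Q sc e nu T x0 (\<lambda>C. 0)"
proof -
  have "pi1_weight (\<lambda>C. 0) = (\<lambda>u. 0)" by (simp add: pi1_weight_def fun_eq_iff)
  then show ?thesis
    using hh_bracket_path_diagonal[OF diag_op_pi1_weight_in_Der0[OF f]
        diag_op_path_diagonal[OF pi1_weight_respects_min_relations]
        diag_op_pi1_weight_in_Der0[OF g] diag_op_path_diagonal[OF pi1_weight_respects_min_relations]]
    by (simp add: theta_eq_hh_class f g hom_kplus_zero diag_op_zero)
qed

end

theorem mainTheorem4:
  fixes Q :: "('v, 'e) quiver"
    and sc :: "'k::field \<Rightarrow> 'a::ring_1 \<Rightarrow> 'a"
    and e :: "'v \<Rightarrow> 'a"
    and nu :: "('v, 'e) walk \<Rightarrow> 'a"
    and T :: "'e set"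
    and x0 :: 'v
  assumes "alg_closed TYPE('k)"
    and "kalgebra sc"
    and "finite_quiver Q"
    and "connected_quiver Q"
    and "no_oriented_cycles Q"
    and "presentation Q sc e nu"
    and "x0 \<in> verts Q"
    and "max_tree Q T"
  shows "\<forall>f \<in> hom (pi1 Q sc nu x0) kplus. \<forall>g \<in> hom (pi1 Q sc nu x0) kplus. \<forall>c::'k.
      (\<exists>D. is_ftilde Q sc e nu T x0 f D) \<and>
      theta Q sc e nu T x0 (\<lambda>C. f C + g C)
        = hh_add sc e (verts Q) (theta Q sc e nu T x0 f) (theta Q sc e nu T x0 g) \<and>
      theta Q sc e nu T x0 (\<lambda>C. c * f C)
        = hh_scale sc e (verts Q) c (theta Q sc e nu T x0 f) \<and>
      hh_bracket sc e (verts Q) (theta Q sc e nu T x0 f) (theta Q sc e nu T x0 g)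
        = theta Q sc e nu T x0 (\<lambda>C. 0)"
proof -
  interpret based_presented_quiver sc Q e nu T x0
    using assms by unfold_locales
  show ?thesis
    using is_ftilde_diag_op theta_add theta_scale theta_bracket by blast
qed

end
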